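(* Let $T$ be the regular rooted tree of valence $p\geq 2$ with the embedded wire diffeology $\mathcal{D}_T$, and equip $\operatorname{Aut}T$ with the functional diffeology. Then the D-topology of $\operatorname{Aut}T$ with respect to this diffeology is the discrete topology.
   Context: Fix a finite alphabet $A$ with $|A|=p\geq 2$. The vertices of $T$ are the finite words over $A$ (the root is the empty word); two vertices are joined by an edge iff they have the form $a_1\dots a_n$ and $a_1\dots a_na_{n+1}$. As a topological space, $T$ is the 1-dimensional CW complex obtained by realizing each edge as a copy of $[0,1]$, with its usual topology. $\operatorname{Aut}T$ is the group of bijections of the vertex set fixing the root and preserving adjacency; each is regarded as a homeomorphism of the geometric realization mapping each edge affinely onto its image edge. A diffeology on a set $X$ is a collection of maps $U\to X$ ("plots"), $U$ ranging over open subsets of all $\mathbb{R}^n$, containing all constant maps, closed under precomposition with smooth maps, and satisfying the sheaf condition. The embedded wire diffeology $\mathcal{D}_T$ is the diffeology on $T$ generated by (i.e. the smallest diffeology containing) all maps $\gamma:\mathbb{R}\to T$ that are injective, continuous, and homeomorphisms onto their images. A map between diffeological spaces is smooth if it sends plots to plots. The functional diffeology on $C^\infty(T,T)$ is the coarsest diffeology such that the evaluation map $C^\infty(T,T)\times T\to T$ is smooth (with the product diffeology, the coarsest making projections smooth); $\operatorname{Aut}T\subseteq C^\infty(T,T)$ carries the subset diffeology. The D-topology of a diffeological space $X$ is the topology in which $S\subseteq X$ is open iff $P^{-1}(S)$ is open for every plot $P$ of $X$. *)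

theory Defs
  imports "HOL-Analysis.Analysis"
begin

text \<open>R^n is encoded as the functions nat => real vanishing at coordinates >= n.\<close>

definition Esp :: "nat \<Rightarrow> (nat \<Rightarrow> real) set" where
  "Esp n = {x. \<forall>i\<ge>n. x i = 0}"

definition edist :: "nat \<Rightarrow> (nat \<Rightarrow> real) \<Rightarrow> (nat \<Rightarrow> real) \<Rightarrow> real" where
  "edist n x y = sqrt (\<Sum>i<n. (x i - y i)^2)"

definition Eopen :: "nat \<Rightarrow> (nat \<Rightarrow> real) set \<Rightarrow> bool" where
  "Eopen n U \<longleftrightarrow> U \<subseteq> Esp n \<and>
     (\<forall>x\<in>U. \<exists>e>0. \<forall>y\<in>Esp n. edist n x y < e \<longrightarrow> y \<in> U)"

definition Econt :: "nat \<Rightarrow> (nat \<Rightarrow> real) set \<Rightarrow> ((nat \<Rightarrow> real) \<Rightarrow> real) \<Rightarrow> bool" where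
  "Econt n U g \<longleftrightarrow>
     (\<forall>x\<in>U. \<forall>e>0. \<exists>d>0. \<forall>y\<in>U. edist n x y < d \<longrightarrow> \<bar>g y - g x\<bar> < e)"

fun Ck :: "nat \<Rightarrow> nat \<Rightarrow> (nat \<Rightarrow> real) set \<Rightarrow> ((nat \<Rightarrow> real) \<Rightarrow> real) \<Rightarrow> bool" where
  "Ck 0 n U g = Econt n U g"
| "Ck (Suc k) n U g =
     (Econt n U g \<and>
      (\<forall>i<n. (\<forall>x\<in>U. (\<lambda>t. g (x(i := x i + t))) differentiable (at 0)) \<and>
             Ck k n U (\<lambda>x. deriv (\<lambda>t. g (x(i := x i + t))) 0)))"

definition Esmooth_real :: "nat \<Rightarrow> (nat \<Rightarrow> real) set \<Rightarrow> ((nat \<Rightarrow> real) \<Rightarrow> real) \<Rightarrow> bool" where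
  "Esmooth_real n U g \<longleftrightarrow> (\<forall>k. Ck k n U g)"

definition Esmooth :: "nat \<Rightarrow> (nat \<Rightarrow> real) set \<Rightarrow> nat \<Rightarrow> (nat \<Rightarrow> real) set
                       \<Rightarrow> ((nat \<Rightarrow> real) \<Rightarrow> (nat \<Rightarrow> real)) \<Rightarrow> bool" where
  "Esmooth m V n U F \<longleftrightarrow> Eopen m V \<and> Eopen n U \<and> F ` V \<subseteq> U \<and>
     (\<forall>j<n. Esmooth_real m V (\<lambda>x. F x j))"

text \<open>A parametrization: dimension n, open domain U of R^n, map (relevant on U only).\<close>
type_synonym 'x plot = "nat \<times> (nat \<Rightarrow> real) set \<times> ((nat \<Rightarrow> real) \<Rightarrow> 'x)"

definition diffeology :: "'x set \<Rightarrow> 'x plot set \<Rightarrow> bool" where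
  "diffeology X D \<longleftrightarrow>
     (\<forall>n U P. (n, U, P) \<in> D \<longrightarrow> Eopen n U \<and> P ` U \<subseteq> X) \<and>
     (\<forall>n U P Q. (n, U, P) \<in> D \<and> (\<forall>x\<in>U. P x = Q x) \<longrightarrow> (n, U, Q) \<in> D) \<and>
     (\<forall>n U c. Eopen n U \<and> c \<in> X \<longrightarrow> (n, U, \<lambda>_. c) \<in> D) \<and>
     (\<forall>n U P m V F. (n, U, P) \<in> D \<and> Esmooth m V n U F \<longrightarrow> (m, V, P \<circ> F) \<in> D) \<and>
     (\<forall>n U P. Eopen n U \<and> P ` U \<subseteq> X \<and>
        (\<forall>x\<in>U. \<exists>V. Eopen n V \<and> x \<in> V \<and> V \<subseteq> U \<and> (n, V, P) \<in> D)
        \<longrightarrow> (n, U, P) \<in> D)"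

definition gen_diffeology :: "'x set \<Rightarrow> 'x plot set \<Rightarrow> 'x plot set" where
  "gen_diffeology X G = \<Inter>{D. diffeology X D \<and> G \<subseteq> D}"

definition dsmooth :: "'x set \<Rightarrow> 'x plot set \<Rightarrow> 'y set \<Rightarrow> 'y plot set \<Rightarrow> ('x \<Rightarrow> 'y) \<Rightarrow> bool" where
  "dsmooth X D Y D' f \<longleftrightarrow> f ` X \<subseteq> Y \<and> (\<forall>n U P. (n, U, P) \<in> D \<longrightarrow> (n, U, f \<circ> P) \<in> D')"

definition prod_diffeology :: "'x plot set \<Rightarrow> 'y plot set \<Rightarrow> ('x \<times> 'y) plot set" where
  "prod_diffeology D1 D2 = {(n, U, P). (n, U, fst \<circ> P) \<in> D1 \<and> (n, U, snd \<circ> P) \<in> D2}"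

definition Cinf :: "'x set \<Rightarrow> 'x plot set \<Rightarrow> 'y set \<Rightarrow> 'y plot set \<Rightarrow> ('x \<Rightarrow> 'y) set" where
  "Cinf X D Y D' = {f \<in> extensional X. dsmooth X D Y D' f}"

text \<open>Functional diffeology: the coarsest (largest) diffeology on C^infty(X,Y) making
  evaluation smooth; as the greatest such diffeology exists, it is the union of all of them.\<close>
definition functional_diffeology :: "'x set \<Rightarrow> 'x plot set \<Rightarrow> 'y set \<Rightarrow> 'y plot set
                                      \<Rightarrow> ('x \<Rightarrow> 'y) plot set" where
  "functional_diffeology X D Y D' =
     \<Union>{E. diffeology (Cinf X D Y D') E \<and>
          dsmooth (Cinf X D Y D' \<times> X) (prod_diffeology E D) Y D' (\<lambda>(f, x). f x)}"

definition subset_diffeology :: "'x plot set \<Rightarrow> 'x set \<Rightarrow> 'x plot set" where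
  "subset_diffeology D A = {(n, U, P). (n, U, P) \<in> D \<and> P ` U \<subseteq> A}"

definition D_open :: "'x plot set \<Rightarrow> 'x set \<Rightarrow> bool" where
  "D_open D S \<longleftrightarrow> (\<forall>n U P. (n, U, P) \<in> D \<longrightarrow> Eopen n {x \<in> U. P x \<in> S})"

text \<open>A point of the realization is either the root ([],0)
  or (w,t) with w nonempty, 0 < t <= 1: the point of the edge from butlast w to w at
  distance t from butlast w; (w,1) is the vertex w.\<close>

definition tree_pts :: "('a list \<times> real) set" where
  "tree_pts = {([], 0)} \<union> {(w, t). w \<noteq> [] \<and> 0 < t \<and> t \<le> 1}"

definition vertex_pt :: "'a list \<Rightarrow> 'a list \<times> real" where
  "vertex_pt v = (if v = [] then ([], 0) else (v, 1))"

text \<open>Characteristic map of the edge from parent u to child w (parameter s in [0,1]).\<close>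
definition edge_pt :: "'a list \<Rightarrow> 'a list \<Rightarrow> real \<Rightarrow> 'a list \<times> real" where
  "edge_pt u w s = (if s = 0 then vertex_pt u else (w, s))"

definition tree_top :: "('a list \<times> real) topology" where
  "tree_top = topology (\<lambda>S. S \<subseteq> tree_pts \<and>
     (\<forall>w. w \<noteq> [] \<longrightarrow>
        openin (top_of_set {0..1::real}) {s \<in> {0..1}. edge_pt (butlast w) w s \<in> S}))"

definition tadj :: "'a list \<Rightarrow> 'a list \<Rightarrow> bool" where
  "tadj u v \<longleftrightarrow> (\<exists>a. v = u @ [a]) \<or> (\<exists>a. u = v @ [a])"

definition is_tree_aut :: "('a list \<Rightarrow> 'a list) \<Rightarrow> bool" where
  "is_tree_aut \<sigma> \<longleftrightarrow> bij \<sigma> \<and> \<sigma> [] = [] \<and> (\<forall>u v. tadj u v \<longleftrightarrow> tadj (\<sigma> u) (\<sigma> v))"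

text \<open>Realization of a vertex map: the edge {butlast w, w} is mapped affinely onto the
  edge {sigma (butlast w), sigma w}, sending the endpoint butlast w to sigma (butlast w).\<close>
definition realize :: "('a list \<Rightarrow> 'a list) \<Rightarrow> 'a list \<times> real \<Rightarrow> 'a list \<times> real" where
  "realize \<sigma> p = (case p of (w, t) \<Rightarrow>
     (if w = [] then vertex_pt (\<sigma> [])
      else (let u' = \<sigma> (butlast w); w' = \<sigma> w in
            if w' \<noteq> [] \<and> butlast w' = u' then edge_pt u' w' t
            else edge_pt w' u' (1 - t))))"

definition AutT :: "('a list \<times> real \<Rightarrow> 'a list \<times> real) set" where
  "AutT = {restrict (realize \<sigma>) tree_pts | \<sigma>. is_tree_aut \<sigma>}"

definition wire :: "(real \<Rightarrow> 'a list \<times> real) \<Rightarrow> bool" where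
  "wire \<gamma> \<longleftrightarrow> inj \<gamma> \<and> continuous_map euclideanreal tree_top \<gamma> \<and>
     homeomorphic_map euclideanreal (subtopology tree_top (range \<gamma>)) \<gamma>"

definition wire_diffeology :: "('a list \<times> real) plot set" where
  "wire_diffeology = gen_diffeology tree_pts
     {(1, Esp 1, \<lambda>x. \<gamma> (x 0)) | \<gamma>. wire \<gamma>}"

definition AutT_diffeology :: "('a list \<times> real \<Rightarrow> 'a list \<times> real) plot set" where
  "AutT_diffeology = subset_diffeology
     (functional_diffeology tree_pts wire_diffeology tree_pts wire_diffeology) AutT"

end

theory Submission
  imports Defs
begin

text \<open>Every wire is continuous for the CW topology, hence so is every plot of the wire
  diffeology. Around a vertex c there is an open set of the tree containing no vertex other
  than c, so a continuous plot taking only vertex values is locally constant. Evaluating a plot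
  of \<open>Aut T\<close> at a fixed vertex gives such a plot (the evaluation map is smooth and the vertex
  is a constant plot); being locally constant on the convex balls of its domain, it is constant
  there. An automorphism is determined by its action on the vertices, so every plot of
  \<open>Aut T\<close> is locally constant, and every subset of \<open>Aut T\<close> is D-open.\<close>

subsection \<open>The CW topology of the tree\<close>

lemma istopology_tree_top:
  "istopology (\<lambda>S. S \<subseteq> tree_pts \<and>
     (\<forall>w. w \<noteq> [] \<longrightarrow>
        openin (top_of_set {0..1::real}) {s \<in> {0..1}. edge_pt (butlast w) w s \<in> S}))"
proof -
  have Int: "{s \<in> {0..1::real}. edge_pt (butlast w) w s \<in> S \<inter> T} =
      {s \<in> {0..1}. edge_pt (butlast w) w s \<in> S} \<inter> {s \<in> {0..1}. edge_pt (butlast w) w s \<in> T}"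
    for S T and w :: "'a list" by blast
  have Union: "{s \<in> {0..1::real}. edge_pt (butlast w) w s \<in> \<Union>K} =
      (\<Union>S\<in>K. {s \<in> {0..1}. edge_pt (butlast w) w s \<in> S})"
    for K and w :: "'a list" by blast
  show ?thesis unfolding istopology_def
    apply (intro conjI allI impI)
    subgoal by blast
    subgoal for S T w unfolding Int by (intro openin_Int) auto
    subgoal by blast
    subgoal for K w unfolding Union by (intro openin_Union) auto
    done
qed

lemma openin_tree_top:
  "openin tree_top S \<longleftrightarrow> S \<subseteq> tree_pts \<and>
     (\<forall>w. w \<noteq> [] \<longrightarrow>
        openin (top_of_set {0..1::real}) {s \<in> {0..1}. edge_pt (butlast w) w s \<in> S})"
  unfolding tree_top_def by (subst topology_inverse'[OF istopology_tree_top]) (rule refl)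

lemma vertex_pt_in_tree_pts: "vertex_pt v \<in> tree_pts"
  by (simp add: vertex_pt_def tree_pts_def)

lemma vertex_pt_inject: "vertex_pt u = vertex_pt v \<longleftrightarrow> u = v"
  by (auto simp: vertex_pt_def split: if_splits)

lemma topspace_tree_top: "topspace tree_top = tree_pts"
proof -
  have "{s \<in> {0..1::real}. edge_pt (butlast w) w s \<in> tree_pts} = {0..1}" if "w \<noteq> []" for w :: "'a list"
    using that vertex_pt_in_tree_pts by (auto simp: edge_pt_def tree_pts_def)
  then have "openin tree_top (tree_pts :: ('a list \<times> real) set)"
    by (simp add: openin_tree_top)
  then show ?thesis
    using openin_subset openin_tree_top by (metis openin_topspace subset_antisym)
qed

definition vertex_nbhd :: "'a list \<times> real \<Rightarrow> ('a list \<times> real) set" where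
  "vertex_nbhd c = insert c (tree_pts - range vertex_pt)"

lemma openin_vertex_nbhd: "openin tree_top (vertex_nbhd (vertex_pt v))"
  unfolding openin_tree_top
proof (intro conjI allI impI)
  show "vertex_nbhd (vertex_pt v) \<subseteq> tree_pts"
    using vertex_pt_in_tree_pts by (auto simp: vertex_nbhd_def)
  fix w :: "'a list" assume w: "w \<noteq> []"
  define Pre where "Pre = {s \<in> {0..1::real}. edge_pt (butlast w) w s \<in> vertex_nbhd (vertex_pt v)}"
  have "s \<in> Pre" if "s \<in> {0<..<1}" for s
    using that w by (auto simp: Pre_def vertex_nbhd_def edge_pt_def tree_pts_def vertex_pt_def)
  \<comment> \<open>So \<open>Pre\<close> lies between \<open>{0<..<1}\<close> and \<open>{0..1}\<close>: it misses at most the endpoints.\<close>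
  then have Pre: "Pre = {0..1} - ({0,1} - Pre)"
    by (force simp: Pre_def)
  have "closedin (top_of_set {0..1::real}) ({0,1} - Pre)"
    unfolding closedin_closed by (rule exI[of _ "{0,1} - Pre"]) (auto intro: finite_imp_closed)
  then have "openin (top_of_set {0..1::real}) Pre"
    by (subst Pre) (intro openin_diff, auto)
  then show "openin (top_of_set {0..1}) {s \<in> {0..1}. edge_pt (butlast w) w s \<in> vertex_nbhd (vertex_pt v)}"
    by (simp add: Pre_def)
qed

lemma Econt_sum_abs_diff:
  fixes k :: nat
  assumes "\<forall>j<k. Econt m V (g j)" "x \<in> V" "e > 0"
  shows "\<exists>d>0. \<forall>y\<in>V. edist m x y < d \<longrightarrow> (\<Sum>j<k. \<bar>g j y - g j x\<bar>) < e"
  using assms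
proof (induction k arbitrary: e)
  case 0
  then show ?case by (intro exI[of _ 1]) auto
next
  case (Suc k)
  then obtain d1 where d1: "d1 > 0" "\<forall>y\<in>V. edist m x y < d1 \<longrightarrow> (\<Sum>j<k. \<bar>g j y - g j x\<bar>) < e/2"
    by (metis half_gt_zero less_SucI)
  obtain d2 where d2: "d2 > 0" "\<forall>y\<in>V. edist m x y < d2 \<longrightarrow> \<bar>g k y - g k x\<bar> < e/2"
    using Suc.prems unfolding Econt_def by (meson half_gt_zero lessI)
  show ?case
    using d1 d2 by (intro exI[of _ "min d1 d2"]) fastforce
qed

lemma edist_le_sum_abs: "edist n x y \<le> (\<Sum>i<n. \<bar>x i - y i\<bar>)"
proof -
  have "edist n x y = L2_set (\<lambda>i. x i - y i) {..<n}" by (simp add: edist_def L2_set_def)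
  also have "\<dots> \<le> (\<Sum>i<n. \<bar>x i - y i\<bar>)" by (rule L2_set_le_sum_abs)
  finally show ?thesis .
qed

lemma Esmooth_continuous:
  assumes "Esmooth m V n U F" "x \<in> V" "e > 0"
  shows "\<exists>d>0. \<forall>y\<in>V. edist m x y < d \<longrightarrow> edist n (F x) (F y) < e"
proof -
  have "\<forall>j<n. Econt m V (\<lambda>x. F x j)"
    using assms(1) unfolding Esmooth_def Esmooth_real_def by (metis Ck.simps(1))
  from Econt_sum_abs_diff[OF this assms(2,3)] obtain d where
    "d > 0" "\<forall>y\<in>V. edist m x y < d \<longrightarrow> (\<Sum>j<n. \<bar>F y j - F x j\<bar>) < e" by blast
  moreover have "edist n (F x) (F y) \<le> (\<Sum>j<n. \<bar>F y j - F x j\<bar>)" for y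
    using edist_le_sum_abs[of n "F x" "F y"] by (simp add: abs_minus_commute)
  ultimately show ?thesis
    by (meson le_less_trans)
qed

definition continuous_plots :: "'x topology \<Rightarrow> 'x plot set" where
  "continuous_plots T = {(n, U, R). Eopen n U \<and> R ` U \<subseteq> topspace T \<and>
     (\<forall>S. openin T S \<longrightarrow> Eopen n {x \<in> U. R x \<in> S})}"

lemma continuous_plot_comp_Esmooth:
  assumes P: "(n, U, P) \<in> continuous_plots T" and F: "Esmooth m V n U F"
  shows "(m, V, P \<circ> F) \<in> continuous_plots T"
proof -
  from F have V: "Eopen m V" and FV: "F ` V \<subseteq> U" and U: "U \<subseteq> Esp n"
    by (auto simp: Esmooth_def Eopen_def)
  have "Eopen m {y \<in> V. P (F y) \<in> S}" if S: "openin T S" for S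
    unfolding Eopen_def
  proof (intro conjI ballI)
    show "{y \<in> V. P (F y) \<in> S} \<subseteq> Esp m" using V by (auto simp: Eopen_def)
    fix y assume y: "y \<in> {y \<in> V. P (F y) \<in> S}"
    have "Eopen n {x \<in> U. P x \<in> S}" using P S by (auto simp: continuous_plots_def)
    then obtain e where e: "e > 0" "\<forall>z\<in>Esp n. edist n (F y) z < e \<longrightarrow> z \<in> U \<and> P z \<in> S"
      using y FV unfolding Eopen_def by blast
    obtain d where d: "d > 0" "\<forall>y'\<in>V. edist m y y' < d \<longrightarrow> edist n (F y) (F y') < e"
      using Esmooth_continuous[OF F _ e(1)] y by blast
    obtain d' where d': "d' > 0" "\<forall>y'\<in>Esp m. edist m y y' < d' \<longrightarrow> y' \<in> V"
      using V y unfolding Eopen_def by blast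
    show "\<exists>e>0. \<forall>y'\<in>Esp m. edist m y y' < e \<longrightarrow> y' \<in> {y \<in> V. P (F y) \<in> S}"
    proof (intro exI[of _ "min d d'"] conjI ballI impI)
      fix y' assume y': "y' \<in> Esp m" "edist m y y' < min d d'"
      then have "y' \<in> V" using d' by auto
      moreover have "F y' \<in> Esp n" using \<open>y' \<in> V\<close> FV U by blast
      ultimately show "y' \<in> {y \<in> V. P (F y) \<in> S}" using d e y' by auto
    qed (use d d' in auto)
  qed
  then show ?thesis
    using P V FV by (auto simp: continuous_plots_def)
qed

lemma diffeology_continuous_plots: "diffeology (topspace T) (continuous_plots T)"
  unfolding diffeology_def
proof (intro conjI allI impI)
  fix n U P Q assume "(n, U, P) \<in> continuous_plots T \<and> (\<forall>x\<in>U. P x = Q x)"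
  moreover have "{x \<in> U. Q x \<in> S} = {x \<in> U. P x \<in> S}" if "\<forall>x\<in>U. P x = Q x" for S
    using that by auto
  ultimately show "(n, U, Q) \<in> continuous_plots T"
    by (auto simp: continuous_plots_def)
next
  fix n U c assume "Eopen n U \<and> c \<in> topspace T"
  moreover have "Eopen n {}" by (simp add: Eopen_def)
  moreover have "{x \<in> U. c \<in> S} = (if c \<in> S then U else {})" for S by auto
  ultimately show "(n, U, \<lambda>_. c) \<in> continuous_plots T"
    by (auto simp: continuous_plots_def)
next
  fix n U P m V F assume "(n, U, P) \<in> continuous_plots T \<and> Esmooth m V n U F"
  then show "(m, V, P \<circ> F) \<in> continuous_plots T"
    using continuous_plot_comp_Esmooth by blast
next
  fix n U P
  assume loc: "Eopen n U \<and> P ` U \<subseteq> topspace T \<and>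
    (\<forall>x\<in>U. \<exists>V. Eopen n V \<and> x \<in> V \<and> V \<subseteq> U \<and> (n, V, P) \<in> continuous_plots T)"
  have "Eopen n {x \<in> U. P x \<in> S}" if S: "openin T S" for S
    unfolding Eopen_def
  proof (intro conjI ballI)
    show "{x \<in> U. P x \<in> S} \<subseteq> Esp n" using loc by (auto simp: Eopen_def)
    fix x assume x: "x \<in> {x \<in> U. P x \<in> S}"
    then obtain V where V: "x \<in> V" "V \<subseteq> U" "Eopen n {x \<in> V. P x \<in> S}"
      using loc S by (auto simp: continuous_plots_def)
    then show "\<exists>e>0. \<forall>y\<in>Esp n. edist n x y < e \<longrightarrow> y \<in> {x \<in> U. P x \<in> S}"
      using x unfolding Eopen_def by blast
  qed
  then show "(n, U, P) \<in> continuous_plots T"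
    using loc by (auto simp: continuous_plots_def)
qed (auto simp: continuous_plots_def)

lemma wire_diffeology_subset_continuous_plots: "wire_diffeology \<subseteq> continuous_plots tree_top"
  unfolding wire_diffeology_def gen_diffeology_def
proof (intro Inter_lower CollectI conjI subsetI)
  show "diffeology tree_pts (continuous_plots tree_top)"
    using diffeology_continuous_plots[of tree_top] by (simp only: topspace_tree_top)
  fix p :: "('a list \<times> real) plot"
  assume "p \<in> {(1, Esp 1, \<lambda>x. \<gamma> (x 0)) | \<gamma>. wire \<gamma>}"
  then obtain \<gamma> :: "real \<Rightarrow> 'a list \<times> real" where p: "p = (1, Esp 1, \<lambda>x. \<gamma> (x 0))"
    and \<gamma>: "continuous_map euclideanreal tree_top \<gamma>"
    by (auto simp: wire_def)
  have "Eopen 1 {x \<in> Esp 1. \<gamma> (x 0) \<in> S}" if S: "openin tree_top S" for S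
    unfolding Eopen_def
  proof (intro conjI ballI)
    fix x assume x: "x \<in> {x \<in> Esp 1. \<gamma> (x 0) \<in> S}"
    have "open (\<gamma> -` S)"
      using \<gamma> S by (simp add: continuous_map_def vimage_def)
    moreover have "x 0 \<in> \<gamma> -` S" using x by simp
    ultimately obtain e where e: "e > 0" "ball (x 0) e \<subseteq> \<gamma> -` S"
      by (rule openE)
    show "\<exists>e>0. \<forall>y\<in>Esp 1. edist 1 x y < e \<longrightarrow> y \<in> {x \<in> Esp 1. \<gamma> (x 0) \<in> S}"
    proof (intro exI[of _ e] conjI ballI impI)
      fix y assume "y \<in> Esp 1" "edist 1 x y < e"
      moreover have "edist 1 x y = dist (x 0) (y 0)" by (simp add: edist_def dist_real_def)
      ultimately show "y \<in> {x \<in> Esp 1. \<gamma> (x 0) \<in> S}" using e by auto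
    qed (rule e)
  qed auto
  moreover have "Eopen 1 (Esp 1)" by (auto simp: Eopen_def intro: exI[of _ 1])
  moreover have "\<gamma> t \<in> topspace tree_top" for t
    using \<gamma> by (auto simp: continuous_map_def)
  ultimately show "p \<in> continuous_plots tree_top"
    unfolding p continuous_plots_def by blast
qed

lemma continuous_plot_vertex_valued_locally_constant:
  assumes R: "(n, U, R) \<in> continuous_plots tree_top"
    and vertex: "\<forall>x\<in>U. R x \<in> range vertex_pt" and x: "x \<in> U"
  shows "\<exists>e>0. \<forall>y\<in>U. edist n x y < e \<longrightarrow> R y = R x"
proof -
  obtain v where v: "R x = vertex_pt v" using vertex x by blast
  then have "Eopen n {y \<in> U. R y \<in> vertex_nbhd (R x)}"
    using R openin_vertex_nbhd by (auto simp: continuous_plots_def)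
  then obtain e where e: "e > 0" "\<forall>y\<in>Esp n. edist n x y < e \<longrightarrow> R y \<in> vertex_nbhd (R x)"
    using x unfolding Eopen_def by (auto simp: vertex_nbhd_def)
  have "U \<subseteq> Esp n" using R by (auto simp: continuous_plots_def Eopen_def)
  show ?thesis
  proof (intro exI[of _ e] conjI ballI impI)
    fix y assume "y \<in> U" "edist n x y < e"
    then have "R y \<in> vertex_nbhd (R x)" "R y \<in> range vertex_pt"
      using e \<open>U \<subseteq> Esp n\<close> vertex by auto
    then show "R y = R x" by (simp add: vertex_nbhd_def)
  qed (rule e(1))
qed

subsection \<open>Locally constant maps on open subsets of \<open>\<real>\<^sup>n\<close>\<close>

lemma edist_segment:
  "edist n (\<lambda>i. x i + s * (y i - x i)) (\<lambda>i. x i + t * (y i - x i)) = \<bar>s - t\<bar> * edist n x y"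
proof -
  have "(\<Sum>i<n. ((x i + s * (y i - x i)) - (x i + t * (y i - x i)))\<^sup>2) =
      (s - t)\<^sup>2 * (\<Sum>i<n. (x i - y i)\<^sup>2)"
    by (simp add: sum_distrib_left power2_eq_square algebra_simps)
  then show ?thesis unfolding edist_def by (simp add: real_sqrt_mult)
qed

lemma locally_constant_imp_constant_on_ball:
  assumes x: "x \<in> Esp n" and ball: "\<forall>y\<in>Esp n. edist n x y < r \<longrightarrow> y \<in> U"
    and loc: "\<forall>z\<in>U. \<exists>e>0. \<forall>y\<in>U. edist n z y < e \<longrightarrow> R y = R z"
    and y: "y \<in> Esp n" "edist n x y < r"
  shows "R y = R x"
proof -
  define L where "L t = (\<lambda>i. x i + t * (y i - x i))" for t :: real
  define D where "D = edist n x y"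
  have D: "D \<ge> 0" unfolding D_def edist_def by (simp add: sum_nonneg)
  have dist_L: "edist n (L s) (L t) = \<bar>s - t\<bar> * D" for s t
    unfolding L_def D_def by (rule edist_segment)
  have L0: "L 0 = x" and L1: "L 1 = y" unfolding L_def by auto
  have LU: "L t \<in> U" if "t \<in> {0..1}" for t
  proof -
    have "edist n x (L t) \<le> D" using dist_L[of 0 t] L0 that D by (simp add: mult_left_le_one_le)
    moreover have "L t \<in> Esp n" using x y unfolding L_def Esp_def by auto
    ultimately show ?thesis using ball y(2) by (simp add: D_def)
  qed
  have "(\<lambda>t. R (L t)) constant_on {0..1}"
  proof (rule locally_constant_imp_constant)
    fix a :: real assume a: "a \<in> {0..1}"
    then obtain e where e: "e > 0" "\<forall>z\<in>U. edist n (L a) z < e \<longrightarrow> R z = R (L a)"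
      using loc LU by blast
    have "R (L t) = R (L a)" if t: "t \<in> {0..1} \<inter> ball a (e / (D + 1))" for t
    proof -
      have "\<bar>a - t\<bar> * D \<le> \<bar>a - t\<bar> * (D + 1)" by (simp add: mult_left_mono)
      also have "\<dots> < e" using t D by (simp add: dist_real_def pos_less_divide_eq)
      finally have "edist n (L a) (L t) < e" by (simp add: dist_L)
      then show ?thesis using e LU t by blast
    qed
    moreover have "a \<in> {0..1} \<inter> ball a (e / (D + 1))" using a e D by simp
    moreover have "openin (top_of_set {0..1}) ({0..1} \<inter> ball a (e / (D + 1)))"
      by (intro openin_open_Int open_ball)
    ultimately show "\<exists>T. openin (top_of_set {0..1}) T \<and> a \<in> T \<and> (\<forall>t\<in>T. R (L t) = R (L a))"
      by blast
  qed simp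
  then obtain c where "\<forall>t\<in>{0..1}. R (L t) = c"
    unfolding constant_on_def by blast
  then show ?thesis
    using L0 L1 by fastforce
qed

lemma D_open_if_plots_locally_constant:
  assumes "\<And>n U P. (n, U, P) \<in> D \<Longrightarrow> U \<subseteq> Esp n"
    and "\<And>n U P x. (n, U, P) \<in> D \<Longrightarrow> x \<in> U \<Longrightarrow>
      \<exists>r>0. \<forall>y\<in>Esp n. edist n x y < r \<longrightarrow> y \<in> U \<and> P y = P x"
  shows "D_open D S"
  unfolding D_open_def Eopen_def
proof (intro allI impI conjI ballI)
  fix n U P assume P: "(n, U, P) \<in> D"
  then show "{x \<in> U. P x \<in> S} \<subseteq> Esp n" using assms(1) by blast
  fix x assume "x \<in> {x \<in> U. P x \<in> S}"
  then show "\<exists>e>0. \<forall>y\<in>Esp n. edist n x y < e \<longrightarrow> y \<in> {x \<in> U. P x \<in> S}"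
    using assms(2)[OF P] by fastforce
qed

lemma diffeology_plot_Eopen:
  assumes "diffeology X D" "(n, U, P) \<in> D" shows "Eopen n U"
proof -
  have "\<forall>n U P. (n, U, P) \<in> D \<longrightarrow> Eopen n U \<and> P ` U \<subseteq> X"
    using assms(1) unfolding diffeology_def by (elim conjE)
  then show ?thesis using assms(2) by blast
qed

lemma diffeology_const_plot:
  assumes "diffeology X D" "Eopen n U" "c \<in> X" shows "(n, U, \<lambda>_. c) \<in> D"
proof -
  have "\<forall>n U c. Eopen n U \<and> c \<in> X \<longrightarrow> (n, U, \<lambda>_. c) \<in> D"
    using assms(1) unfolding diffeology_def by (elim conjE)
  then show ?thesis using assms(2,3) by blast
qed

lemma gen_diffeology_const:
  "Eopen n U \<Longrightarrow> c \<in> X \<Longrightarrow> (n, U, \<lambda>_. c) \<in> gen_diffeology X G"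
  unfolding gen_diffeology_def by (auto intro: diffeology_const_plot)

lemma functional_diffeology_Eopen:
  "(n, U, P) \<in> functional_diffeology X D Y D' \<Longrightarrow> Eopen n U"
  unfolding functional_diffeology_def by (auto intro: diffeology_plot_Eopen)

lemma functional_diffeology_eval:
  assumes P: "(n, U, P) \<in> functional_diffeology X D Y D'" and x: "(n, U, \<lambda>_. x) \<in> D"
  shows "(n, U, \<lambda>z. P z x) \<in> D'"
proof -
  obtain E where E: "(n, U, P) \<in> E"
    and eval: "dsmooth (Cinf X D Y D' \<times> X) (prod_diffeology E D) Y D' (\<lambda>(f, x). f x)"
    using P unfolding functional_diffeology_def by blast
  have "(n, U, \<lambda>z. (P z, x)) \<in> prod_diffeology E D"
    using E x by (simp add: prod_diffeology_def comp_def)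
  then have "(n, U, (\<lambda>(f, x). f x) \<circ> (\<lambda>z. (P z, x))) \<in> D'"
    using eval unfolding dsmooth_def by blast
  then show ?thesis by (simp add: comp_def)
qed

subsection \<open>Plots of the automorphism group\<close>

lemma realize_vertex_pt: "realize \<sigma> (vertex_pt v) = vertex_pt (\<sigma> v)"
  by (cases "v = []") (auto simp: realize_def vertex_pt_def edge_pt_def Let_def)

lemma AutT_vertex_pt: "f \<in> AutT \<Longrightarrow> f (vertex_pt v) \<in> range vertex_pt"
  unfolding AutT_def by (auto simp: vertex_pt_in_tree_pts realize_vertex_pt)

lemma AutT_eqI:
  assumes "f \<in> AutT" "g \<in> AutT" and "\<And>v. f (vertex_pt v) = g (vertex_pt v)"
  shows "f = g"
proof -
  obtain \<sigma> \<tau> where f: "f = restrict (realize \<sigma>) tree_pts" and g: "g = restrict (realize \<tau>) tree_pts"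
    using assms(1,2) unfolding AutT_def by blast
  have "vertex_pt (\<sigma> v) = vertex_pt (\<tau> v)" for v
    using assms(3)[of v] by (simp add: f g vertex_pt_in_tree_pts realize_vertex_pt)
  then have "\<sigma> = \<tau>" by (simp add: vertex_pt_inject fun_eq_iff)
  then show ?thesis by (simp add: f g)
qed

lemma AutT_plot_locally_constant:
  assumes P: "(n, U, P) \<in> (AutT_diffeology :: ('a list \<times> real \<Rightarrow> 'a list \<times> real) plot set)"
    and x: "x \<in> U"
  shows "\<exists>r>0. \<forall>y\<in>Esp n. edist n x y < r \<longrightarrow> y \<in> U \<and> P y = P x"
proof -
  have PA: "P ` U \<subseteq> AutT"
    and PF: "(n, U, P) \<in> functional_diffeology tree_pts wire_diffeology tree_pts wire_diffeology"
    using P by (auto simp: AutT_diffeology_def subset_diffeology_def)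
  have U: "Eopen n U" by (rule functional_diffeology_Eopen[OF PF])
  have eval_locally_constant:
    "\<forall>z\<in>U. \<exists>e>0. \<forall>y\<in>U. edist n z y < e \<longrightarrow> P y (vertex_pt v) = P z (vertex_pt v)" for v
  proof -
    have "(n, U, \<lambda>_. vertex_pt v) \<in> wire_diffeology"
      unfolding wire_diffeology_def by (rule gen_diffeology_const[OF U vertex_pt_in_tree_pts])
    then have "(n, U, \<lambda>z. P z (vertex_pt v)) \<in> wire_diffeology"
      by (rule functional_diffeology_eval[OF PF])
    moreover have "\<forall>z\<in>U. P z (vertex_pt v) \<in> range vertex_pt"
      using PA AutT_vertex_pt by blast
    ultimately show ?thesis
      using wire_diffeology_subset_continuous_plots continuous_plot_vertex_valued_locally_constant
      by blast
  qed
  obtain r where r: "r > 0" "\<forall>y\<in>Esp n. edist n x y < r \<longrightarrow> y \<in> U"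
    using U x unfolding Eopen_def by blast
  have "P y = P x" if y: "y \<in> Esp n" "edist n x y < r" for y
  proof (rule AutT_eqI)
    show "P y \<in> AutT" "P x \<in> AutT" using PA r y x by auto
    show "P y (vertex_pt v) = P x (vertex_pt v)" for v
      using locally_constant_imp_constant_on_ball[OF _ r(2) eval_locally_constant y] U x
      by (auto simp: Eopen_def)
  qed
  then show ?thesis using r by blast
qed

theorem mainTheorem6:
  assumes "CARD('a::finite) \<ge> 2"
  shows "\<forall>S \<subseteq> (AutT :: ('a list \<times> real \<Rightarrow> 'a list \<times> real) set).
           D_open AutT_diffeology S"
proof (intro allI impI D_open_if_plots_locally_constant)
  fix n U and P :: "(nat \<Rightarrow> real) \<Rightarrow> 'a list \<times> real \<Rightarrow> 'a list \<times> real"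
  assume "(n, U, P) \<in> AutT_diffeology"
  then show "U \<subseteq> Esp n"
    using functional_diffeology_Eopen
    by (fastforce simp: AutT_diffeology_def subset_diffeology_def Eopen_def)
qed (rule AutT_plot_locally_constant)

end
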